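(* Let $X$ be a locally connected space and let $\mathcal{G}, \mathcal{F}, \mathcal{F}'$ be locally constant sheaves of $k$-vector spaces on $X$. Let $\Phi = (\Phi_x)_{x\in X}$ be a stalkwise isomorphism $\mathcal{G}\to\mathcal{F}$ and $\Psi = (\Psi_x)_{x\in X}$ a stalkwise isomorphism $\mathcal{G}\to\mathcal{F}'$, and suppose $\Phi$ and $\Psi$ have the same deviation, i.e. for all $x,y\in X$ and every connected open set $U\ni x,y$ which is simple for all three sheaves, $\upsilon(\Phi)^U_{yx} = \upsilon(\Psi)^U_{yx}$. Then there is a unique isomorphism of sheaves $T\colon \mathcal{F}\to\mathcal{F}'$ such that $\Psi_x = T_x\Phi_x$ for all $x\in X$.
   Context: An open set $U$ is simple for a sheaf $\mathcal{S}$ if $\mathcal{S}|_U$ is isomorphic to a constant sheaf; if $U$ is also connected, each stalk restriction $\mathcal{S}_{x\in U}\colon \mathcal{S}(U)\to\mathcal{S}_x$ ($x\in U$) is an isomorphism. A stalkwise isomorphism $\Phi\colon\mathcal{G}\to\mathcal{F}$ is a family of linear isomorphisms $\Phi_x\colon\mathcal{G}_x\to\mathcal{F}_x$, $x\in X$, not required to be natural. Its deviation assigns to $x,y\in X$ and a connected open $U\ni x,y$ simple for $\mathcal{G}$ and $\mathcal{F}$ the automorphism $\upsilon(\Phi)^U_{yx} = \mathcal{G}_{y\in U}^{-1}\,\Phi_y^{-1}\,\mathcal{F}_{y\in U}\,\mathcal{F}_{x\in U}^{-1}\,\Phi_x\,\mathcal{G}_{x\in U}$ of $\mathcal{G}(U)$.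 *)

theory Defs
  imports "HOL-Analysis.Analysis" "HOL-Library.Function_Algebras"
begin

text \<open>A presheaf of k-vector spaces on a topological space (the type 'a, X = UNIV):
  sections over U form a linear subspace of an ambient k-vector space 'v
  (scalar multiplication scl), res U V s is the restriction of s from U to V.\<close>

record ('a, 'k, 'v) sheaf =
  sec :: "'a set \<Rightarrow> 'v set"
  res :: "'a set \<Rightarrow> 'a set \<Rightarrow> 'v \<Rightarrow> 'v"
  scl :: "'k \<Rightarrow> 'v \<Rightarrow> 'v"

definition is_sheaf :: "('a::topological_space, 'k::field, 'v::ab_group_add) sheaf \<Rightarrow> bool" where
  "is_sheaf S \<longleftrightarrow>
     vector_space (scl S) \<and>
     (\<forall>U. open U \<longrightarrow> module.subspace (scl S) (sec S U)) \<and>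
     (\<forall>U V. open U \<and> open V \<and> V \<subseteq> U \<longrightarrow>
        (\<forall>s\<in>sec S U. res S U V s \<in> sec S V) \<and>
        (\<forall>s\<in>sec S U. \<forall>t\<in>sec S U. res S U V (s + t) = res S U V s + res S U V t) \<and>
        (\<forall>c. \<forall>s\<in>sec S U. res S U V (scl S c s) = scl S c (res S U V s))) \<and>
     (\<forall>U. open U \<longrightarrow> (\<forall>s\<in>sec S U. res S U U s = s)) \<and>
     (\<forall>U V W. open U \<and> open V \<and> open W \<and> W \<subseteq> V \<and> V \<subseteq> U \<longrightarrow>
        (\<forall>s\<in>sec S U. res S V W (res S U V s) = res S U W s)) \<and>
     \<comment> \<open>locality\<close>
     (\<forall>U \<C>. open U \<and> (\<forall>V\<in>\<C>. open V) \<and> \<Union>\<C> = U \<longrightarrow>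
        (\<forall>s\<in>sec S U. \<forall>t\<in>sec S U. (\<forall>V\<in>\<C>. res S U V s = res S U V t) \<longrightarrow> s = t)) \<and>
     \<comment> \<open>gluing\<close>
     (\<forall>U \<C> f. open U \<and> (\<forall>V\<in>\<C>. open V) \<and> \<Union>\<C> = U \<and> (\<forall>V\<in>\<C>. f V \<in> sec S V) \<and>
        (\<forall>V\<in>\<C>. \<forall>W\<in>\<C>. res S V (V \<inter> W) (f V) = res S W (V \<inter> W) (f W)) \<longrightarrow>
        (\<exists>s\<in>sec S U. \<forall>V\<in>\<C>. res S U V s = f V))"

definition sheaf_hom_on ::
  "'a::topological_space set \<Rightarrow> ('a, 'k::field, 'v::ab_group_add) sheaf \<Rightarrow> ('a, 'k, 'w::ab_group_add) sheaf
   \<Rightarrow> ('a set \<Rightarrow> 'v \<Rightarrow> 'w) \<Rightarrow> bool" where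
  "sheaf_hom_on W S S' T \<longleftrightarrow>
     (\<forall>V. open V \<and> V \<subseteq> W \<longrightarrow>
        (\<forall>s\<in>sec S V. T V s \<in> sec S' V) \<and>
        (\<forall>s\<in>sec S V. \<forall>t\<in>sec S V. T V (s + t) = T V s + T V t) \<and>
        (\<forall>c. \<forall>s\<in>sec S V. T V (scl S c s) = scl S' c (T V s))) \<and>
     (\<forall>V V'. open V \<and> open V' \<and> V' \<subseteq> V \<and> V \<subseteq> W \<longrightarrow>
        (\<forall>s\<in>sec S V. T V' (res S V V' s) = res S' V V' (T V s)))"

definition sheaf_iso_on ::
  "'a::topological_space set \<Rightarrow> ('a, 'k::field, 'v::ab_group_add) sheaf \<Rightarrow> ('a, 'k, 'w::ab_group_add) sheaf
   \<Rightarrow> ('a set \<Rightarrow> 'v \<Rightarrow> 'w) \<Rightarrow> bool" where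
  "sheaf_iso_on W S S' T \<longleftrightarrow> sheaf_hom_on W S S' T \<and>
     (\<forall>V. open V \<and> V \<subseteq> W \<longrightarrow> bij_betw (T V) (sec S V) (sec S' V))"

text \<open>The constant sheaf with stalk E (a subspace of 'v) on the open set U:
  sections over V are the locally constant functions V \<rightarrow> E (extended by 0 off V).\<close>

definition const_sheaf :: "('k \<Rightarrow> 'v \<Rightarrow> 'v) \<Rightarrow> 'v::ab_group_add set
   \<Rightarrow> ('a::topological_space, 'k, 'a \<Rightarrow> 'v) sheaf" where
  "const_sheaf sc E =
     \<lparr> sec = (\<lambda>V. {f. (\<forall>x\<in>V. f x \<in> E) \<and> (\<forall>x. x \<notin> V \<longrightarrow> f x = 0) \<and>
                     (\<forall>x\<in>V. \<exists>W. open W \<and> x \<in> W \<and> W \<subseteq> V \<and> (\<forall>y\<in>W. f y = f x))}),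
       res = (\<lambda>V W f x. if x \<in> W then f x else 0),
       scl = (\<lambda>c f x. sc c (f x)) \<rparr>"

definition simple_for :: "('a::topological_space, 'k::field, 'v::ab_group_add) sheaf \<Rightarrow> 'a set \<Rightarrow> bool" where
  "simple_for S U \<longleftrightarrow> (\<exists>E T. module.subspace (scl S) E \<and> sheaf_iso_on U S (const_sheaf (scl S) E) T)"

definition locally_constant_sheaf :: "('a::topological_space, 'k::field, 'v::ab_group_add) sheaf \<Rightarrow> bool" where
  "locally_constant_sheaf S \<longleftrightarrow> is_sheaf S \<and> (\<forall>x. \<exists>U. open U \<and> x \<in> U \<and> simple_for S U)"

text \<open>Stalks as sets of germs (equivalence classes of pairs (V,t)).\<close>

definition germ :: "('a::topological_space, 'k, 'v) sheaf \<Rightarrow> 'a \<Rightarrow> 'a set \<Rightarrow> 'v \<Rightarrow> ('a set \<times> 'v) set" where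
  "germ S x U s = {(V, t). open V \<and> x \<in> V \<and> t \<in> sec S V \<and>
      (\<exists>W. open W \<and> x \<in> W \<and> W \<subseteq> U \<inter> V \<and> res S U W s = res S V W t)}"

definition stalk :: "('a::topological_space, 'k, 'v) sheaf \<Rightarrow> 'a \<Rightarrow> ('a set \<times> 'v) set set" where
  "stalk S x = {germ S x U s | U s. open U \<and> x \<in> U \<and> s \<in> sec S U}"

definition stalk_add :: "('a::topological_space, 'k, 'v::ab_group_add) sheaf \<Rightarrow> 'a
    \<Rightarrow> ('a set \<times> 'v) set \<Rightarrow> ('a set \<times> 'v) set \<Rightarrow> ('a set \<times> 'v) set" where
  "stalk_add S x a b = (THE c. \<exists>U s t. open U \<and> x \<in> U \<and> s \<in> sec S U \<and> t \<in> sec S U \<and>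
       a = germ S x U s \<and> b = germ S x U t \<and> c = germ S x U (s + t))"

definition stalk_scale :: "('a::topological_space, 'k, 'v) sheaf \<Rightarrow> 'a
    \<Rightarrow> 'k \<Rightarrow> ('a set \<times> 'v) set \<Rightarrow> ('a set \<times> 'v) set" where
  "stalk_scale S x c a = (THE d. \<exists>U s. open U \<and> x \<in> U \<and> s \<in> sec S U \<and>
       a = germ S x U s \<and> d = germ S x U (scl S c s))"

definition stalk_lin_iso :: "('a::topological_space, 'k, 'v::ab_group_add) sheaf \<Rightarrow> ('a, 'k, 'w::ab_group_add) sheaf
    \<Rightarrow> 'a \<Rightarrow> (('a set \<times> 'v) set \<Rightarrow> ('a set \<times> 'w) set) \<Rightarrow> bool" where
  "stalk_lin_iso S S' x \<phi> \<longleftrightarrow> bij_betw \<phi> (stalk S x) (stalk S' x) \<and>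
     (\<forall>a\<in>stalk S x. \<forall>b\<in>stalk S x. \<phi> (stalk_add S x a b) = stalk_add S' x (\<phi> a) (\<phi> b)) \<and>
     (\<forall>c. \<forall>a\<in>stalk S x. \<phi> (stalk_scale S x c a) = stalk_scale S' x c (\<phi> a))"

text \<open>Stalkwise isomorphism: a (not necessarily natural) family of linear isomorphisms of stalks.\<close>

definition stalkwise_iso :: "('a::topological_space, 'k, 'v::ab_group_add) sheaf \<Rightarrow> ('a, 'k, 'w::ab_group_add) sheaf
    \<Rightarrow> ('a \<Rightarrow> ('a set \<times> 'v) set \<Rightarrow> ('a set \<times> 'w) set) \<Rightarrow> bool" where
  "stalkwise_iso S S' \<Phi> \<longleftrightarrow> (\<forall>x. stalk_lin_iso S S' x (\<Phi> x))"

text \<open>Deviation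
  upsilon(Phi)^U_yx = G_{y in U}^-1 Phi_y^-1 F_{y in U} F_{x in U}^-1 Phi_x G_{x in U},
  as a map on G(U); the stalk restriction S_{x in U} is s \<mapsto> germ S x U s.\<close>

definition deviation :: "('a::topological_space, 'k, 'v::ab_group_add) sheaf \<Rightarrow> ('a, 'k, 'w::ab_group_add) sheaf
    \<Rightarrow> ('a \<Rightarrow> ('a set \<times> 'v) set \<Rightarrow> ('a set \<times> 'w) set) \<Rightarrow> 'a set \<Rightarrow> 'a \<Rightarrow> 'a \<Rightarrow> 'v \<Rightarrow> 'v" where
  "deviation G F \<Phi> U y x s =
     inv_into (sec G U) (germ G y U)
       (inv_into (stalk G y) (\<Phi> y)
         (germ F y U
           (inv_into (sec F U) (germ F x U)
             (\<Phi> x (germ G x U s)))))"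

definition stalk_map :: "('a::topological_space, 'k, 'v) sheaf \<Rightarrow> ('a, 'k, 'w) sheaf
    \<Rightarrow> ('a set \<Rightarrow> 'v \<Rightarrow> 'w) \<Rightarrow> 'a \<Rightarrow> ('a set \<times> 'v) set \<Rightarrow> ('a set \<times> 'w) set" where
  "stalk_map S S' T x a = (THE b. \<exists>U s. open U \<and> x \<in> U \<and> s \<in> sec S U \<and>
       a = germ S x U s \<and> b = germ S' x U (T U s))"

end

theory Submission
  imports Defs
begin

(*
  On a connected open set W that is simple for G, F and F', taking germs at any point z of W is a
  bijection from the sections over W onto the stalk at z. Read through these bijections, the
  hypothesis on deviations says that the stalk isomorphisms theta_z = Psi_z Phi_z^-1 : F_z -> F'_z do
  not depend on z in W; hence theta maps sections of F over W germwise to sections of F' over W.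
  Since X is locally connected, such sets W form a basis, so by gluing theta maps sections to
  sections over every open set, and so does its inverse. A stalkwise isomorphism with this property
  is induced by a unique sheaf isomorphism T, and T_x Phi_x = Psi_x says exactly that T_x = theta_x.
*)

lemma is_sheafD:
  assumes "is_sheaf S"
  shows "vector_space (scl S)"
    and "\<forall>U. open U \<longrightarrow> module.subspace (scl S) (sec S U)"
    and "\<forall>U V. open U \<and> open V \<and> V \<subseteq> U \<longrightarrow>
        (\<forall>s\<in>sec S U. res S U V s \<in> sec S V) \<and>
        (\<forall>s\<in>sec S U. \<forall>t\<in>sec S U. res S U V (s + t) = res S U V s + res S U V t) \<and>
        (\<forall>c. \<forall>s\<in>sec S U. res S U V (scl S c s) = scl S c (res S U V s))"
    and "\<forall>U V W. open U \<and> open V \<and> open W \<and> W \<subseteq> V \<and> V \<subseteq> U \<longrightarrow>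
        (\<forall>s\<in>sec S U. res S V W (res S U V s) = res S U W s)"
    and "\<forall>U \<C>. open U \<and> (\<forall>V\<in>\<C>. open V) \<and> \<Union>\<C> = U \<longrightarrow>
        (\<forall>s\<in>sec S U. \<forall>t\<in>sec S U. (\<forall>V\<in>\<C>. res S U V s = res S U V t) \<longrightarrow> s = t)"
    and "\<forall>U \<C> f. open U \<and> (\<forall>V\<in>\<C>. open V) \<and> \<Union>\<C> = U \<and> (\<forall>V\<in>\<C>. f V \<in> sec S V) \<and>
        (\<forall>V\<in>\<C>. \<forall>W\<in>\<C>. res S V (V \<inter> W) (f V) = res S W (V \<inter> W) (f W)) \<longrightarrow>
        (\<exists>s\<in>sec S U. \<forall>V\<in>\<C>. res S U V s = f V)"
  using assms unfolding is_sheaf_def by - (elim conjE, assumption)+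

lemma sheaf_res_in_sec:
  "is_sheaf S \<Longrightarrow> open U \<Longrightarrow> open V \<Longrightarrow> V \<subseteq> U \<Longrightarrow> s \<in> sec S U \<Longrightarrow> res S U V s \<in> sec S V"
  by (meson is_sheafD(3))

lemma sheaf_res_add:
  "is_sheaf S \<Longrightarrow> open U \<Longrightarrow> open V \<Longrightarrow> V \<subseteq> U \<Longrightarrow> s \<in> sec S U \<Longrightarrow> t \<in> sec S U \<Longrightarrow>
   res S U V (s + t) = res S U V s + res S U V t"
  by (meson is_sheafD(3))

lemma sheaf_res_scale:
  "is_sheaf S \<Longrightarrow> open U \<Longrightarrow> open V \<Longrightarrow> V \<subseteq> U \<Longrightarrow> s \<in> sec S U \<Longrightarrow>
   res S U V (scl S c s) = scl S c (res S U V s)"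
  by (meson is_sheafD(3))

lemma sheaf_res_res:
  "is_sheaf S \<Longrightarrow> open U \<Longrightarrow> open V \<Longrightarrow> open W \<Longrightarrow> W \<subseteq> V \<Longrightarrow> V \<subseteq> U \<Longrightarrow> s \<in> sec S U \<Longrightarrow>
   res S V W (res S U V s) = res S U W s"
  by (meson is_sheafD(4))

lemma sheaf_locality:
  "is_sheaf S \<Longrightarrow> open U \<Longrightarrow> \<forall>V\<in>\<C>. open V \<Longrightarrow> \<Union>\<C> = U \<Longrightarrow> s \<in> sec S U \<Longrightarrow> t \<in> sec S U \<Longrightarrow>
   \<forall>V\<in>\<C>. res S U V s = res S U V t \<Longrightarrow> s = t"
  by (meson is_sheafD(5))

lemma sheaf_gluing:
  "is_sheaf S \<Longrightarrow> open U \<Longrightarrow> \<forall>V\<in>\<C>. open V \<Longrightarrow> \<Union>\<C> = U \<Longrightarrow> \<forall>V\<in>\<C>. f V \<in> sec S V \<Longrightarrow>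
   \<forall>V\<in>\<C>. \<forall>W\<in>\<C>. res S V (V \<inter> W) (f V) = res S W (V \<inter> W) (f W) \<Longrightarrow>
   \<exists>s\<in>sec S U. \<forall>V\<in>\<C>. res S U V s = f V"
  by (drule is_sheafD(6)) blast

lemma sheaf_add_in_sec: "is_sheaf S \<Longrightarrow> open U \<Longrightarrow> s \<in> sec S U \<Longrightarrow> t \<in> sec S U \<Longrightarrow> s + t \<in> sec S U"
  by (metis is_sheafD(1,2) module.subspace_add module_iff_vector_space)

lemma sheaf_scale_in_sec: "is_sheaf S \<Longrightarrow> open U \<Longrightarrow> s \<in> sec S U \<Longrightarrow> scl S c s \<in> sec S U"
  by (metis is_sheafD(1,2) module.subspace_scale module_iff_vector_space)

lemma sheaf_res_eq_mono:
  assumes "is_sheaf S" "open U" "open U'" "open W" "open W'" "W' \<subseteq> W" "W \<subseteq> U" "W \<subseteq> U'"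
    and "s \<in> sec S U" "s' \<in> sec S U'" "res S U W s = res S U' W s'"
  shows "res S U W' s = res S U' W' s'"
  by (metis assms sheaf_res_res)

lemma sheaf_hom_on_in_sec: "sheaf_hom_on W S S' T \<Longrightarrow> open V \<Longrightarrow> V \<subseteq> W \<Longrightarrow> s \<in> sec S V \<Longrightarrow> T V s \<in> sec S' V"
  unfolding sheaf_hom_on_def by simp

lemma sheaf_hom_on_res:
  "sheaf_hom_on W S S' T \<Longrightarrow> open V \<Longrightarrow> open V' \<Longrightarrow> V' \<subseteq> V \<Longrightarrow> V \<subseteq> W \<Longrightarrow> s \<in> sec S V \<Longrightarrow>
   T V' (res S V V' s) = res S' V V' (T V s)"
  unfolding sheaf_hom_on_def by simp

lemma sheaf_iso_on_bij: "sheaf_iso_on W S S' T \<Longrightarrow> open V \<Longrightarrow> V \<subseteq> W \<Longrightarrow> bij_betw (T V) (sec S V) (sec S' V)"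
  unfolding sheaf_iso_on_def by simp

lemma sheaf_iso_on_subset: "sheaf_iso_on U S S' T \<Longrightarrow> W \<subseteq> U \<Longrightarrow> sheaf_iso_on W S S' T"
  unfolding sheaf_iso_on_def sheaf_hom_on_def
  by (elim conjE, intro conjI allI impI; meson dual_order.trans)

subsection \<open>Germs\<close>

definition same_germ :: "('a::topological_space, 'k, 'v) sheaf \<Rightarrow> 'a \<Rightarrow> 'a set \<Rightarrow> 'v \<Rightarrow> 'a set \<Rightarrow> 'v \<Rightarrow> bool"
  where "same_germ S x U s V t \<longleftrightarrow> (\<exists>W. open W \<and> x \<in> W \<and> W \<subseteq> U \<inter> V \<and> res S U W s = res S V W t)"

lemma germ_same_germ: "germ S x U s = {(V, t). open V \<and> x \<in> V \<and> t \<in> sec S V \<and> same_germ S x U s V t}"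
  unfolding germ_def same_germ_def ..

lemma same_germ_refl: "open U \<Longrightarrow> x \<in> U \<Longrightarrow> same_germ S x U s U s"
  unfolding same_germ_def by blast

lemma same_germ_sym: "same_germ S x U s V t \<Longrightarrow> same_germ S x V t U s"
  unfolding same_germ_def by (metis Int_commute)

lemma same_germ_trans:
  assumes S: "is_sheaf S" and "open U" "open V" "open V'" "s \<in> sec S U" "t \<in> sec S V" "t' \<in> sec S V'"
    and "same_germ S x U s V t" "same_germ S x V t V' t'"
  shows "same_germ S x U s V' t'"
proof -
  obtain W where W: "open W" "x \<in> W" "W \<subseteq> U \<inter> V" "res S U W s = res S V W t"
    using assms(8) unfolding same_germ_def by blast
  obtain W' where W': "open W'" "x \<in> W'" "W' \<subseteq> V \<inter> V'" "res S V W' t = res S V' W' t'"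
    using assms(9) unfolding same_germ_def by blast
  have "res S U (W \<inter> W') s = res S V (W \<inter> W') t"
    using sheaf_res_eq_mono[OF S, of U V W "W \<inter> W'" s t] assms W W' by auto
  also have "\<dots> = res S V' (W \<inter> W') t'"
    using sheaf_res_eq_mono[OF S, of V V' W' "W \<inter> W'" t t'] assms W W' by auto
  finally show ?thesis
    unfolding same_germ_def using W W' by (intro exI[of _ "W \<inter> W'"]) auto
qed

lemma germ_eq_iff:
  assumes S: "is_sheaf S" and "open U" "open V" "x \<in> U" "x \<in> V" "s \<in> sec S U" "t \<in> sec S V"
  shows "germ S x U s = germ S x V t \<longleftrightarrow> same_germ S x U s V t"
proof
  assume "germ S x U s = germ S x V t"
  then have "(V, t) \<in> germ S x U s"
    using assms by (simp add: germ_same_germ same_germ_refl)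
  then show "same_germ S x U s V t"
    by (simp add: germ_same_germ)
next
  assume st: "same_germ S x U s V t"
  show "germ S x U s = germ S x V t"
    unfolding germ_same_germ
    using same_germ_trans[OF S] same_germ_sym[OF st] st assms by blast
qed

lemma germ_in_stalk: "open U \<Longrightarrow> x \<in> U \<Longrightarrow> s \<in> sec S U \<Longrightarrow> germ S x U s \<in> stalk S x"
  unfolding stalk_def by blast

lemma germ_res:
  assumes "is_sheaf S" "open U" "open W" "x \<in> W" "W \<subseteq> U" "s \<in> sec S U"
  shows "germ S x W (res S U W s) = germ S x U s"
  using assms sheaf_res_in_sec[OF assms(1)] sheaf_res_res[OF assms(1)]
  by (subst germ_eq_iff) (auto simp: same_germ_def intro!: exI[of _ W])

lemma sheaf_sec_eqI_germ:
  assumes S: "is_sheaf S" and "open V" "s \<in> sec S V" "t \<in> sec S V"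
    and "\<And>x. x \<in> V \<Longrightarrow> germ S x V s = germ S x V t"
  shows "s = t"
proof (rule sheaf_locality[OF S \<open>open V\<close>])
  let ?\<C> = "{W. open W \<and> W \<subseteq> V \<and> res S V W s = res S V W t}"
  have "\<forall>x\<in>V. \<exists>W. open W \<and> x \<in> W \<and> W \<subseteq> V \<and> res S V W s = res S V W t"
    using assms germ_eq_iff[OF S, of V V] unfolding same_germ_def by auto
  then show "\<Union>?\<C> = V"
    by blast
qed (use assms in auto)

lemma sheaf_res_Int_eqI_germ:
  assumes S: "is_sheaf S" and "open W1" "open W2" "t1 \<in> sec S W1" "t2 \<in> sec S W2"
    and "\<And>z. z \<in> W1 \<inter> W2 \<Longrightarrow> germ S z W1 t1 = germ S z W2 t2"
  shows "res S W1 (W1 \<inter> W2) t1 = res S W2 (W1 \<inter> W2) t2"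
proof (rule sheaf_sec_eqI_germ[OF S])
  fix z
  assume "z \<in> W1 \<inter> W2"
  then show "germ S z (W1 \<inter> W2) (res S W1 (W1 \<inter> W2) t1) = germ S z (W1 \<inter> W2) (res S W2 (W1 \<inter> W2) t2)"
    using germ_res[OF S, of W1 "W1 \<inter> W2" z t1] germ_res[OF S, of W2 "W1 \<inter> W2" z t2] assms by auto
qed (use assms in \<open>auto intro!: sheaf_res_in_sec[OF S]\<close>)

lemma same_germ_add:
  assumes S: "is_sheaf S" and "open U" "open U'" "s \<in> sec S U" "t \<in> sec S U" "s' \<in> sec S U'" "t' \<in> sec S U'"
    and "same_germ S x U s U' s'" "same_germ S x U t U' t'"
  shows "same_germ S x U (s + t) U' (s' + t')"
proof -
  obtain W1 where W1: "open W1" "x \<in> W1" "W1 \<subseteq> U \<inter> U'" "res S U W1 s = res S U' W1 s'"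
    using assms(8) unfolding same_germ_def by blast
  obtain W2 where W2: "open W2" "x \<in> W2" "W2 \<subseteq> U \<inter> U'" "res S U W2 t = res S U' W2 t'"
    using assms(9) unfolding same_germ_def by blast
  let ?W = "W1 \<inter> W2"
  have W: "open ?W" "?W \<subseteq> U" "?W \<subseteq> U'"
    using W1 W2 by auto
  have "res S U ?W s = res S U' ?W s'" "res S U ?W t = res S U' ?W t'"
    using sheaf_res_eq_mono[OF S assms(2,3) W1(1) W(1)] sheaf_res_eq_mono[OF S assms(2,3) W2(1) W(1)]
      assms W1 W2 by auto
  then have "res S U ?W (s + t) = res S U' ?W (s' + t')"
    using sheaf_res_add[OF S assms(2) W(1,2) assms(4,5)] sheaf_res_add[OF S assms(3) W(1,3) assms(6,7)]
    by simp
  then show ?thesis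
    unfolding same_germ_def using W1 W2 by (intro exI[of _ ?W]) auto
qed

lemma same_germ_scale:
  assumes S: "is_sheaf S" and "open U" "open U'" "s \<in> sec S U" "s' \<in> sec S U'"
    and "same_germ S x U s U' s'"
  shows "same_germ S x U (scl S c s) U' (scl S c s')"
proof -
  obtain W where W: "open W" "x \<in> W" "W \<subseteq> U \<inter> U'" "res S U W s = res S U' W s'"
    using assms(6) unfolding same_germ_def by blast
  then have "res S U W (scl S c s) = res S U' W (scl S c s')"
    using sheaf_res_scale[OF S] assms by auto
  then show ?thesis
    unfolding same_germ_def using W by blast
qed

lemma stalk_add_germ:
  assumes S: "is_sheaf S" and U: "open U" "x \<in> U" and "s \<in> sec S U" "t \<in> sec S U"
  shows "stalk_add S x (germ S x U s) (germ S x U t) = germ S x U (s + t)"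
  unfolding stalk_add_def
proof (rule the_equality)
  fix c
  assume "\<exists>U' s' t'. open U' \<and> x \<in> U' \<and> s' \<in> sec S U' \<and> t' \<in> sec S U' \<and>
    germ S x U s = germ S x U' s' \<and> germ S x U t = germ S x U' t' \<and> c = germ S x U' (s' + t')"
  then obtain U' s' t' where U': "open U'" "x \<in> U'" "s' \<in> sec S U'" "t' \<in> sec S U'"
    and "same_germ S x U s U' s'" "same_germ S x U t U' t'" and c: "c = germ S x U' (s' + t')"
    using germ_eq_iff[OF S] assms by metis
  then have "same_germ S x U (s + t) U' (s' + t')"
    using same_germ_add[OF S] assms by blast
  then show "c = germ S x U (s + t)"
    using c germ_eq_iff[OF S] sheaf_add_in_sec[OF S] U' assms by metis
qed (use assms in blast)

lemma stalk_scale_germ: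
  assumes S: "is_sheaf S" and U: "open U" "x \<in> U" and "s \<in> sec S U"
  shows "stalk_scale S x c (germ S x U s) = germ S x U (scl S c s)"
  unfolding stalk_scale_def
proof (rule the_equality)
  fix d
  assume "\<exists>U' s'. open U' \<and> x \<in> U' \<and> s' \<in> sec S U' \<and> germ S x U s = germ S x U' s' \<and>
    d = germ S x U' (scl S c s')"
  then obtain U' s' where U': "open U'" "x \<in> U'" "s' \<in> sec S U'"
    and "same_germ S x U s U' s'" and d: "d = germ S x U' (scl S c s')"
    using germ_eq_iff[OF S] assms by metis
  then have "same_germ S x U (scl S c s) U' (scl S c s')"
    using same_germ_scale[OF S] assms by blast
  then show "d = germ S x U (scl S c s)"
    using d germ_eq_iff[OF S] sheaf_scale_in_sec[OF S] U' assms by metis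
qed (use assms in blast)

lemma stalk_elems_common_open:
  assumes S: "is_sheaf S" and "a \<in> stalk S x" "b \<in> stalk S x"
  obtains U s t where "open U" "x \<in> U" "s \<in> sec S U" "t \<in> sec S U" "a = germ S x U s" "b = germ S x U t"
proof -
  obtain U1 s1 where 1: "open U1" "x \<in> U1" "s1 \<in> sec S U1" "a = germ S x U1 s1"
    using assms unfolding stalk_def by blast
  obtain U2 s2 where 2: "open U2" "x \<in> U2" "s2 \<in> sec S U2" "b = germ S x U2 s2"
    using assms unfolding stalk_def by blast
  let ?U = "U1 \<inter> U2"
  show thesis
  proof (rule that[of ?U "res S U1 ?U s1" "res S U2 ?U s2"])
    show "a = germ S x ?U (res S U1 ?U s1)" "b = germ S x ?U (res S U2 ?U s2)"
      using germ_res[OF S 1(1) _ _ _ 1(3), of ?U x] germ_res[OF S 2(1) _ _ _ 2(3), of ?U x] 1 2 by auto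
  qed (use 1 2 in \<open>auto intro!: sheaf_res_in_sec[OF S]\<close>)
qed

lemma stalk_add_closed: "is_sheaf S \<Longrightarrow> a \<in> stalk S x \<Longrightarrow> b \<in> stalk S x \<Longrightarrow> stalk_add S x a b \<in> stalk S x"
  by (metis stalk_elems_common_open stalk_add_germ germ_in_stalk sheaf_add_in_sec)

lemma stalk_scale_closed: "is_sheaf S \<Longrightarrow> a \<in> stalk S x \<Longrightarrow> stalk_scale S x c a \<in> stalk S x"
  by (metis stalk_elems_common_open stalk_scale_germ germ_in_stalk sheaf_scale_in_sec)

lemma same_germ_sheaf_hom:
  assumes T: "sheaf_hom_on UNIV S S' T" and "open U" "open U'" "s \<in> sec S U" "s' \<in> sec S U'"
    and "same_germ S x U s U' s'"
  shows "same_germ S' x U (T U s) U' (T U' s')"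
proof -
  obtain W where W: "open W" "x \<in> W" "W \<subseteq> U \<inter> U'" "res S U W s = res S U' W s'"
    using assms(6) unfolding same_germ_def by blast
  then have "res S' U W (T U s) = res S' U' W (T U' s')"
    using sheaf_hom_on_res[OF T] assms by (metis le_inf_iff subset_UNIV)
  then show ?thesis
    unfolding same_germ_def using W by blast
qed

lemma stalk_map_germ:
  assumes S: "is_sheaf S" and S': "is_sheaf S'" and T: "sheaf_hom_on UNIV S S' T"
    and U: "open U" "x \<in> U" and s: "s \<in> sec S U"
  shows "stalk_map S S' T x (germ S x U s) = germ S' x U (T U s)"
  unfolding stalk_map_def
proof (rule the_equality)
  fix b
  assume "\<exists>U' s'. open U' \<and> x \<in> U' \<and> s' \<in> sec S U' \<and> germ S x U s = germ S x U' s' \<and>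
    b = germ S' x U' (T U' s')"
  then obtain U' s' where U': "open U'" "x \<in> U'" "s' \<in> sec S U'"
    and "same_germ S x U s U' s'" and b: "b = germ S' x U' (T U' s')"
    using germ_eq_iff[OF S] U s by metis
  then have "same_germ S' x U (T U s) U' (T U' s')"
    using same_germ_sheaf_hom[OF T] U s by blast
  then show "b = germ S' x U (T U s)"
    using b germ_eq_iff[OF S'] sheaf_hom_on_in_sec[OF T] U' U s by (metis subset_UNIV)
qed (use U s in blast)

subsection \<open>Simple open sets\<close>

lemma sec_const_sheaf:
  "sec (const_sheaf sc E) V = {f. (\<forall>x\<in>V. f x \<in> E) \<and> (\<forall>x. x \<notin> V \<longrightarrow> f x = 0) \<and>
     (\<forall>x\<in>V. \<exists>W. open W \<and> x \<in> W \<and> W \<subseteq> V \<and> (\<forall>y\<in>W. f y = f x))}"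
  by (simp add: const_sheaf_def)

lemma res_const_sheaf: "res (const_sheaf sc E) V W f = (\<lambda>x. if x \<in> W then f x else 0)"
  by (simp add: const_sheaf_def)

lemma const_sheaf_sec_constant_on:
  assumes "f \<in> sec (const_sheaf sc E) W" "connected W"
  shows "f constant_on W"
  using assms(2)
proof (rule locally_constant_imp_constant)
  fix a
  assume "a \<in> W"
  moreover have "\<forall>x\<in>W. \<exists>N. open N \<and> x \<in> N \<and> N \<subseteq> W \<and> (\<forall>y\<in>N. f y = f x)"
    using assms(1) by (simp add: sec_const_sheaf)
  ultimately obtain N where "open N" "a \<in> N" "N \<subseteq> W" "\<forall>y\<in>N. f y = f a"
    by blast
  then show "\<exists>T. openin (top_of_set W) T \<and> a \<in> T \<and> (\<forall>x\<in>T. f x = f a)"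
    using open_subset by blast
qed

lemma const_sheaf_sec_eqI:
  assumes f: "f \<in> sec (const_sheaf sc E) W" and g: "g \<in> sec (const_sheaf sc E) W"
    and "connected W" "x \<in> W" "f x = g x"
  shows "f = g"
proof
  fix z
  show "f z = g z"
  proof (cases "z \<in> W")
    case True
    then show ?thesis
      using const_sheaf_sec_constant_on[OF f] const_sheaf_sec_constant_on[OF g] assms(3-5)
      unfolding constant_on_def by metis
  next
    case False
    then show ?thesis
      using f g by (simp add: sec_const_sheaf)
  qed
qed

lemma inj_on_germ_simple:
  assumes S: "is_sheaf S" and W: "open W" "connected W" "simple_for S W" "x \<in> W"
  shows "inj_on (germ S x W) (sec S W)"
proof (rule inj_onI)
  fix s t
  assume s: "s \<in> sec S W" and t: "t \<in> sec S W" and "germ S x W s = germ S x W t"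
  then obtain W0 where W0: "open W0" "x \<in> W0" "W0 \<subseteq> W" "res S W W0 s = res S W W0 t"
    using germ_eq_iff[OF S W(1) W(1) W(4) W(4)] unfolding same_germ_def by auto
  obtain E T where T: "sheaf_iso_on W S (const_sheaf (scl S) E) T"
    using W(3) unfolding simple_for_def by blast
  then have hom: "sheaf_hom_on W S (const_sheaf (scl S) E) T"
    by (simp add: sheaf_iso_on_def)
  have "res (const_sheaf (scl S) E) W W0 (T W s) = res (const_sheaf (scl S) E) W W0 (T W t)"
    using sheaf_hom_on_res[OF hom W(1) W0(1) W0(3) order_refl] s t W0(4) by metis
  then have "T W s x = T W t x"
    using W0(2) by (auto simp: res_const_sheaf dest: fun_cong[where x = x])
  then have "T W s = T W t"
    using const_sheaf_sec_eqI sheaf_hom_on_in_sec[OF hom W(1) order_refl] s t W by blast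
  then show "s = t"
    using sheaf_iso_on_bij[OF T W(1) order_refl] s t by (auto simp: bij_betw_def inj_on_def)
qed

lemma const_sheaf_sec_extend:
  assumes W: "open W" "W0 \<subseteq> W" "x \<in> W0" and f: "f \<in> sec (const_sheaf sc E) W0"
  obtains c W1 where "c \<in> sec (const_sheaf sc E) W" "open W1" "x \<in> W1" "W1 \<subseteq> W0"
    "res (const_sheaf sc E) W W1 c = res (const_sheaf sc E) W0 W1 f"
proof -
  have fx: "f x \<in> E" and "\<exists>W1. open W1 \<and> x \<in> W1 \<and> W1 \<subseteq> W0 \<and> (\<forall>y\<in>W1. f y = f x)"
    using f W(3) by (simp_all add: sec_const_sheaf)
  then obtain W1 where W1: "open W1" "x \<in> W1" "W1 \<subseteq> W0" "\<forall>y\<in>W1. f y = f x"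
    by blast
  define c where "c = (\<lambda>z. if z \<in> W then f x else 0)"
  show thesis
  proof (rule that[OF _ W1(1-3)])
    show "c \<in> sec (const_sheaf sc E) W"
      using fx W(1) unfolding sec_const_sheaf c_def by (simp, blast)
    show "res (const_sheaf sc E) W W1 c = res (const_sheaf sc E) W0 W1 f"
      unfolding res_const_sheaf c_def using W(2) W1(3,4) by (intro ext) auto
  qed
qed

lemma germ_image_simple:
  assumes S: "is_sheaf S" and W: "open W" "simple_for S W" "x \<in> W"
  shows "germ S x W ` sec S W = stalk S x"
proof
  show "germ S x W ` sec S W \<subseteq> stalk S x"
    using W by (auto intro: germ_in_stalk)
next
  obtain E T where T: "sheaf_iso_on W S (const_sheaf (scl S) E) T"
    using W(2) unfolding simple_for_def by blast
  let ?C = "const_sheaf (scl S) E"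
  have hom: "sheaf_hom_on W S ?C T"
    using T by (simp add: sheaf_iso_on_def)
  show "stalk S x \<subseteq> germ S x W ` sec S W"
  proof
    fix a
    assume "a \<in> stalk S x"
    then obtain V u where a: "a = germ S x V u" and V: "open V" "x \<in> V" and u: "u \<in> sec S V"
      unfolding stalk_def by blast
    let ?W0 = "V \<inter> W"
    have W0: "open ?W0" "x \<in> ?W0" and u0: "res S V ?W0 u \<in> sec S ?W0"
      using V W sheaf_res_in_sec[OF S V(1) _ _ u] by auto
    obtain c W1 where c: "c \<in> sec ?C W" and W1: "open W1" "x \<in> W1" "W1 \<subseteq> ?W0"
      and res_c: "res ?C W W1 c = res ?C ?W0 W1 (T ?W0 (res S V ?W0 u))"
      using const_sheaf_sec_extend[OF W(1) _ W0(2) sheaf_hom_on_in_sec[OF hom W0(1) _ u0]] by blast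
    obtain s where s: "s \<in> sec S W" "T W s = c"
      using c sheaf_iso_on_bij[OF T W(1) order_refl] by (metis bij_betw_def imageE)
    have "T W1 (res S W W1 s) = res ?C W W1 c"
      using sheaf_hom_on_res[OF hom W(1) W1(1) _ order_refl s(1)] W1(3) s(2) by auto
    also have "\<dots> = T W1 (res S ?W0 W1 (res S V ?W0 u))"
      using res_c sheaf_hom_on_res[OF hom W0(1) W1(1,3) _ u0] by simp
    also have "\<dots> = T W1 (res S V W1 u)"
      using sheaf_res_res[OF S V(1) W0(1) W1(1,3) _ u] by simp
    finally have "res S W W1 s = res S V W1 u"
      using sheaf_iso_on_bij[OF T W1(1)] sheaf_res_in_sec[OF S] W V W1 s u
      unfolding bij_betw_def by (metis inj_onD le_inf_iff)
    then have "germ S x W s = a"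
      unfolding a using germ_eq_iff[OF S W(1) V(1) W(3) V(2) s(1) u] W1
      unfolding same_germ_def by blast
    then show "a \<in> germ S x W ` sec S W"
      using s(1) by blast
  qed
qed

lemma bij_betw_germ_simple:
  "is_sheaf S \<Longrightarrow> open W \<Longrightarrow> connected W \<Longrightarrow> simple_for S W \<Longrightarrow> x \<in> W \<Longrightarrow>
   bij_betw (germ S x W) (sec S W) (stalk S x)"
  unfolding bij_betw_def using inj_on_germ_simple germ_image_simple by blast

lemma simple_for_subset: "simple_for S U \<Longrightarrow> W \<subseteq> U \<Longrightarrow> simple_for S W"
  unfolding simple_for_def using sheaf_iso_on_subset by blast

lemma simple_connected_nhd:
  fixes G :: "('a::topological_space, 'k::field, 'g::ab_group_add) sheaf"
    and F :: "('a, 'k, 'f::ab_group_add) sheaf"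
    and F' :: "('a, 'k, 'h::ab_group_add) sheaf"
  assumes "locally connected (UNIV :: 'a set)"
    and "locally_constant_sheaf G" "locally_constant_sheaf F" "locally_constant_sheaf F'"
    and "open V" "x \<in> V"
  obtains W where "open W" "connected W" "x \<in> W" "W \<subseteq> V"
    "simple_for G W" "simple_for F W" "simple_for F' W"
proof -
  obtain U1 U2 U3 where U: "open U1" "open U2" "open U3" "x \<in> U1" "x \<in> U2" "x \<in> U3"
    "simple_for G U1" "simple_for F U2" "simple_for F' U3"
    using assms(2-4) unfolding locally_constant_sheaf_def by metis
  have "open (V \<inter> U1 \<inter> U2 \<inter> U3)" "x \<in> V \<inter> U1 \<inter> U2 \<inter> U3"
    using U assms(5,6) by auto
  then obtain W where "open W" "connected W" "x \<in> W" "W \<subseteq> V \<inter> U1 \<inter> U2 \<inter> U3"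
    using assms(1) unfolding locally_connected by (metis open_openin subtopology_UNIV)
  then show thesis
    using that simple_for_subset U(7-9) by (metis le_inf_iff)
qed

lemma sheaf_glue_germs:
  assumes S: "is_sheaf S" and V: "open V"
    and represented: "\<And>x. x \<in> V \<Longrightarrow>
      \<exists>W t. open W \<and> x \<in> W \<and> W \<subseteq> V \<and> t \<in> sec S W \<and> (\<forall>z\<in>W. germ S z W t = g z)"
  shows "\<exists>t\<in>sec S V. \<forall>z\<in>V. germ S z V t = g z"
proof -
  define rep where "rep W t \<longleftrightarrow> t \<in> sec S W \<and> (\<forall>z\<in>W. germ S z W t = g z)" for W t
  define \<C> where "\<C> = {W. open W \<and> W \<subseteq> V \<and> (\<exists>t. rep W t)}"
  define f where "f W = (SOME t. rep W t)" for W
  have \<C>: "open W" "W \<subseteq> V" "rep W (f W)" if "W \<in> \<C>" for W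
    using that someI_ex[of "rep W"] unfolding \<C>_def f_def by auto
  have f_sec: "f W \<in> sec S W" and f_germ: "\<And>z. z \<in> W \<Longrightarrow> germ S z W (f W) = g z" if "W \<in> \<C>" for W
    using \<C>(3)[OF that] unfolding rep_def by auto
  have \<C>_cover: "\<Union>\<C> = V"
  proof
    show "V \<subseteq> \<Union>\<C>"
    proof
      fix x
      assume "x \<in> V"
      have "\<exists>W t. open W \<and> x \<in> W \<and> W \<subseteq> V \<and> rep W t"
        using represented[OF \<open>x \<in> V\<close>] unfolding rep_def .
      then show "x \<in> \<Union>\<C>"
        unfolding \<C>_def by blast
    qed
  qed (use \<C> in blast)
  have "\<exists>t\<in>sec S V. \<forall>W\<in>\<C>. res S V W t = f W"
  proof (rule sheaf_gluing[OF S V _ \<C>_cover])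
    show "\<forall>W1\<in>\<C>. \<forall>W2\<in>\<C>. res S W1 (W1 \<inter> W2) (f W1) = res S W2 (W1 \<inter> W2) (f W2)"
      using sheaf_res_Int_eqI_germ[OF S] \<C> f_sec f_germ by (metis IntD1 IntD2)
  qed (use \<C> f_sec in auto)
  then obtain t where t: "t \<in> sec S V" "\<forall>W\<in>\<C>. res S V W t = f W"
    by blast
  have "germ S z V t = g z" if z: "z \<in> V" for z
  proof -
    obtain W where W: "W \<in> \<C>" "z \<in> W"
      using \<C>_cover z by blast
    then have "germ S z V t = germ S z W (res S V W t)"
      using germ_res[OF S V _ W(2) _ t(1)] \<C> by simp
    also have "\<dots> = g z"
      using t(2) f_germ W by simp
    finally show ?thesis .
  qed
  with t show ?thesis
    by blast
qed

subsection \<open>Linear isomorphisms of stalks\<close>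

lemma stalkwise_iso_bij: "stalkwise_iso S S' \<Phi> \<Longrightarrow> bij_betw (\<Phi> x) (stalk S x) (stalk S' x)"
  unfolding stalkwise_iso_def stalk_lin_iso_def by blast

lemma stalk_lin_iso_inv_into:
  assumes S: "is_sheaf S" and \<phi>: "stalk_lin_iso S S' x \<phi>"
  shows "stalk_lin_iso S' S x (inv_into (stalk S x) \<phi>)"
proof -
  let ?\<psi> = "inv_into (stalk S x) \<phi>"
  have bij: "bij_betw \<phi> (stalk S x) (stalk S' x)"
    using \<phi> by (simp add: stalk_lin_iso_def)
  have \<psi>: "?\<psi> b \<in> stalk S x" "\<phi> (?\<psi> b) = b" if "b \<in> stalk S' x" for b
    using bij that by (auto simp: bij_betw_def inv_into_into f_inv_into_f)
  have \<psi>\<phi>: "?\<psi> (\<phi> a) = a" if "a \<in> stalk S x" for a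
    using bij that by (simp add: bij_betw_inv_into_left)
  have "?\<psi> (stalk_add S' x b1 b2) = stalk_add S x (?\<psi> b1) (?\<psi> b2)"
    if "b1 \<in> stalk S' x" "b2 \<in> stalk S' x" for b1 b2
  proof -
    have "stalk_add S' x b1 b2 = \<phi> (stalk_add S x (?\<psi> b1) (?\<psi> b2))"
      using \<phi> \<psi> that unfolding stalk_lin_iso_def by metis
    then show ?thesis
      using \<psi>\<phi> stalk_add_closed[OF S] \<psi> that by metis
  qed
  moreover have "?\<psi> (stalk_scale S' x c b) = stalk_scale S x c (?\<psi> b)" if "b \<in> stalk S' x" for c b
  proof -
    have "stalk_scale S' x c b = \<phi> (stalk_scale S x c (?\<psi> b))"
      using \<phi> \<psi> that unfolding stalk_lin_iso_def by metis
    then show ?thesis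
      using \<psi>\<phi> stalk_scale_closed[OF S] \<psi> that by metis
  qed
  ultimately show ?thesis
    unfolding stalk_lin_iso_def using bij_betw_inv_into[OF bij] by blast
qed

lemma stalk_lin_iso_comp:
  assumes \<phi>: "stalk_lin_iso S S' x \<phi>" and \<psi>: "stalk_lin_iso S' S'' x \<psi>"
  shows "stalk_lin_iso S S'' x (\<psi> \<circ> \<phi>)"
proof -
  have bij: "bij_betw \<phi> (stalk S x) (stalk S' x)" "bij_betw \<psi> (stalk S' x) (stalk S'' x)"
    using \<phi> \<psi> by (simp_all add: stalk_lin_iso_def)
  then have "\<phi> a \<in> stalk S' x" if "a \<in> stalk S x" for a
    using that bij_betwE by blast
  then show ?thesis
    using \<phi> \<psi> bij_betw_trans[OF bij] unfolding stalk_lin_iso_def by auto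
qed

definition stalk_transfer ::
  "('a::topological_space, 'k, 'g) sheaf \<Rightarrow> ('a \<Rightarrow> ('a set \<times> 'g) set \<Rightarrow> ('a set \<times> 'f) set)
   \<Rightarrow> ('a \<Rightarrow> ('a set \<times> 'g) set \<Rightarrow> ('a set \<times> 'h) set) \<Rightarrow> 'a \<Rightarrow> ('a set \<times> 'f) set \<Rightarrow> ('a set \<times> 'h) set"
  where "stalk_transfer G \<Phi> \<Psi> x = \<Psi> x \<circ> inv_into (stalk G x) (\<Phi> x)"

lemma stalkwise_iso_stalk_transfer:
  "is_sheaf G \<Longrightarrow> stalkwise_iso G F \<Phi> \<Longrightarrow> stalkwise_iso G F' \<Psi> \<Longrightarrow>
   stalkwise_iso F F' (stalk_transfer G \<Phi> \<Psi>)"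
  unfolding stalkwise_iso_def stalk_transfer_def
  using stalk_lin_iso_comp stalk_lin_iso_inv_into by blast

lemma stalk_transfer_apply:
  "stalkwise_iso G F \<Phi> \<Longrightarrow> a \<in> stalk G x \<Longrightarrow> stalk_transfer G \<Phi> \<Psi> x (\<Phi> x a) = \<Psi> x a"
  by (simp add: stalk_transfer_def bij_betw_inv_into_left[OF stalkwise_iso_bij])

lemma stalk_transfer_swap:
  assumes "stalkwise_iso G F \<Phi>" "stalkwise_iso G F' \<Psi>" and "c \<in> stalk F' x"
  shows "stalk_transfer G \<Phi> \<Psi> x (stalk_transfer G \<Psi> \<Phi> x c) = c"
  using stalkwise_iso_bij[OF assms(1), of x] stalkwise_iso_bij[OF assms(2), of x] assms(3)
  by (simp add: stalk_transfer_def bij_betw_inv_into_left bij_betw_def inv_into_into f_inv_into_f)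

lemma stalk_transfer_factor_iff:
  assumes \<Phi>: "stalkwise_iso G F \<Phi>"
  shows "(\<forall>a\<in>stalk G x. \<Psi> x a = f (\<Phi> x a)) \<longleftrightarrow> (\<forall>b\<in>stalk F x. f b = stalk_transfer G \<Phi> \<Psi> x b)"
proof
  assume factor: "\<forall>a\<in>stalk G x. \<Psi> x a = f (\<Phi> x a)"
  show "\<forall>b\<in>stalk F x. f b = stalk_transfer G \<Phi> \<Psi> x b"
  proof
    fix b
    assume "b \<in> stalk F x"
    then have "inv_into (stalk G x) (\<Phi> x) b \<in> stalk G x" "\<Phi> x (inv_into (stalk G x) (\<Phi> x) b) = b"
      using stalkwise_iso_bij[OF \<Phi>, of x] by (auto simp: bij_betw_def inv_into_into f_inv_into_f)
    then show "f b = stalk_transfer G \<Phi> \<Psi> x b"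
      using factor by (metis comp_apply stalk_transfer_def)
  qed
next
  assume "\<forall>b\<in>stalk F x. f b = stalk_transfer G \<Phi> \<Psi> x b"
  then show "\<forall>a\<in>stalk G x. \<Psi> x a = f (\<Phi> x a)"
    using stalk_transfer_apply[OF \<Phi>] stalkwise_iso_bij[OF \<Phi>, of x] bij_betwE by metis
qed

subsection \<open>Deviation\<close>

definition same_deviation ::
  "('a::topological_space, 'k::field, 'g::ab_group_add) sheaf \<Rightarrow> ('a, 'k, 'f::ab_group_add) sheaf
   \<Rightarrow> ('a \<Rightarrow> ('a set \<times> 'g) set \<Rightarrow> ('a set \<times> 'f) set)
   \<Rightarrow> ('a, 'k, 'h::ab_group_add) sheaf \<Rightarrow> ('a \<Rightarrow> ('a set \<times> 'g) set \<Rightarrow> ('a set \<times> 'h) set) \<Rightarrow> bool"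
  where "same_deviation G F \<Phi> F' \<Psi> \<longleftrightarrow>
    (\<forall>x y U. open U \<and> connected U \<and> x \<in> U \<and> y \<in> U \<and>
       simple_for G U \<and> simple_for F U \<and> simple_for F' U \<longrightarrow>
       (\<forall>s\<in>sec G U. deviation G F \<Phi> U y x s = deviation G F' \<Psi> U y x s))"

lemma same_deviation_sym: "same_deviation G F \<Phi> F' \<Psi> \<Longrightarrow> same_deviation G F' \<Psi> F \<Phi>"
  unfolding same_deviation_def by metis

text \<open>Read through the bijections \<open>F(W) \<rightarrow> F\<^sub>z\<close> and \<open>F'(W) \<rightarrow> F'\<^sub>z\<close> given by germs on a connected
  simple \<open>W\<close>, equal deviations say that the transfer at \<open>z\<close> agrees with the transfer at \<open>x\<close>.\<close>

lemma stalk_transfer_germ_propagates: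
  assumes G: "is_sheaf G" and F: "is_sheaf F" and F': "is_sheaf F'"
    and \<Phi>: "stalkwise_iso G F \<Phi>" and \<Psi>: "stalkwise_iso G F' \<Psi>"
    and W: "open W" "connected W" "simple_for G W" "simple_for F W" "simple_for F' W" "x \<in> W" "z \<in> W"
    and dev: "\<forall>g\<in>sec G W. deviation G F \<Phi> W z x g = deviation G F' \<Psi> W z x g"
    and s: "s \<in> sec F W" and t: "t \<in> sec F' W"
    and at_x: "germ F' x W t = stalk_transfer G \<Phi> \<Psi> x (germ F x W s)"
  shows "germ F' z W t = stalk_transfer G \<Phi> \<Psi> z (germ F z W s)"
proof -
  have bij_G: "bij_betw (germ G y W) (sec G W) (stalk G y)" if "y \<in> W" for y
    using bij_betw_germ_simple[OF G W(1-3) that] .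
  have inj_F: "inj_on (germ F x W) (sec F W)" and inj_F': "inj_on (germ F' x W) (sec F' W)"
    using inj_on_germ_simple[OF F W(1,2,4,6)] inj_on_germ_simple[OF F' W(1,2,5,6)] .
  note bij_\<Phi> = stalkwise_iso_bij[OF \<Phi>] and bij_\<Psi> = stalkwise_iso_bij[OF \<Psi>]
  define b where "b = inv_into (stalk G x) (\<Phi> x) (germ F x W s)"
  have b: "b \<in> stalk G x" "\<Phi> x b = germ F x W s" "\<Psi> x b = germ F' x W t"
    using bij_\<Phi> germ_in_stalk[OF W(1,6) s] at_x
    by (auto simp: b_def stalk_transfer_def bij_betw_def inv_into_into f_inv_into_f)
  define g where "g = inv_into (sec G W) (germ G x W) b"
  have g: "g \<in> sec G W" "germ G x W g = b"
    using bij_G[OF W(6)] b(1) by (auto simp: g_def bij_betw_def inv_into_into f_inv_into_f)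
  have "deviation G F \<Phi> W z x g =
        inv_into (sec G W) (germ G z W) (inv_into (stalk G z) (\<Phi> z) (germ F z W s))"
    unfolding deviation_def g(2) b(2) using inj_F s by (simp add: inv_into_f_f)
  moreover have "deviation G F' \<Psi> W z x g =
        inv_into (sec G W) (germ G z W) (inv_into (stalk G z) (\<Psi> z) (germ F' z W t))"
    unfolding deviation_def g(2) b(3) using inj_F' t by (simp add: inv_into_f_f)
  moreover have "inj_on (inv_into (sec G W) (germ G z W)) (stalk G z)"
    using bij_betw_inv_into[OF bij_G[OF W(7)]] by (simp add: bij_betw_def)
  moreover have "inv_into (stalk G z) (\<Phi> z) (germ F z W s) \<in> stalk G z"
    "inv_into (stalk G z) (\<Psi> z) (germ F' z W t) \<in> stalk G z"
    using bij_\<Phi> bij_\<Psi> germ_in_stalk[OF W(1,7) s] germ_in_stalk[OF W(1,7) t]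
    by (auto simp: bij_betw_def inv_into_into)
  ultimately have "inv_into (stalk G z) (\<Phi> z) (germ F z W s) = inv_into (stalk G z) (\<Psi> z) (germ F' z W t)"
    using dev g(1) by (metis inj_onD)
  then show ?thesis
    using bij_\<Psi> germ_in_stalk[OF W(1,7) t]
    by (simp add: stalk_transfer_def bij_betw_def f_inv_into_f)
qed

lemma stalk_transfer_lifts_section:
  fixes G :: "('a::topological_space, 'k::field, 'g::ab_group_add) sheaf"
    and F :: "('a, 'k, 'f::ab_group_add) sheaf"
    and F' :: "('a, 'k, 'h::ab_group_add) sheaf"
  assumes lc: "locally connected (UNIV :: 'a set)"
    and G: "locally_constant_sheaf G" and F: "locally_constant_sheaf F" and F': "locally_constant_sheaf F'"
    and \<Phi>: "stalkwise_iso G F \<Phi>" and \<Psi>: "stalkwise_iso G F' \<Psi>"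
    and dev: "same_deviation G F \<Phi> F' \<Psi>"
    and V: "open V" and s: "s \<in> sec F V"
  shows "\<exists>t\<in>sec F' V. \<forall>z\<in>V. germ F' z V t = stalk_transfer G \<Phi> \<Psi> z (germ F z V s)"
proof -
  have SG: "is_sheaf G" and SF: "is_sheaf F" and SF': "is_sheaf F'"
    using G F F' by (simp_all add: locally_constant_sheaf_def)
  let ?\<theta> = "stalk_transfer G \<Phi> \<Psi>"
  show ?thesis
  proof (rule sheaf_glue_germs[OF SF' V])
    fix x
    assume "x \<in> V"
    then obtain W where W: "open W" "connected W" "x \<in> W" "W \<subseteq> V"
      "simple_for G W" "simple_for F W" "simple_for F' W"
      using simple_connected_nhd[OF lc G F F' V] by metis
    let ?s = "res F V W s"
    have s': "?s \<in> sec F W"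
      using sheaf_res_in_sec[OF SF V W(1,4) s] .
    have "?\<theta> x (germ F x W ?s) \<in> stalk F' x"
      using stalkwise_iso_bij[OF stalkwise_iso_stalk_transfer[OF SG \<Phi> \<Psi>]] germ_in_stalk[OF W(1,3) s']
      by (auto simp: bij_betw_def)
    then obtain t where t: "t \<in> sec F' W" "germ F' x W t = ?\<theta> x (germ F x W ?s)"
      using germ_image_simple[OF SF' W(1,7,3)] by (metis imageE)
    have "germ F' z W t = ?\<theta> z (germ F z V s)" if z: "z \<in> W" for z
    proof -
      have "\<forall>g\<in>sec G W. deviation G F \<Phi> W z x g = deviation G F' \<Psi> W z x g"
        using dev W z unfolding same_deviation_def by blast
      then have "germ F' z W t = ?\<theta> z (germ F z W ?s)"
        using stalk_transfer_germ_propagates[OF SG SF SF' \<Phi> \<Psi> W(1,2,5-7,3) z _ s' t] by blast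
      then show ?thesis
        using germ_res[OF SF V W(1) z W(4) s] by simp
    qed
    then show "\<exists>W t. open W \<and> x \<in> W \<and> W \<subseteq> V \<and> t \<in> sec F' W \<and>
                 (\<forall>z\<in>W. germ F' z W t = ?\<theta> z (germ F z V s))"
      using W t(1) by blast
  qed
qed

subsection \<open>Stalkwise isomorphisms preserving sections\<close>

locale section_preserving_stalk_iso =
  fixes F :: "('a::topological_space, 'k::field, 'v::ab_group_add) sheaf"
    and F' :: "('a, 'k, 'w::ab_group_add) sheaf"
    and \<theta> :: "'a \<Rightarrow> ('a set \<times> 'v) set \<Rightarrow> ('a set \<times> 'w) set"
  assumes sheaf_F: "is_sheaf F" and sheaf_F': "is_sheaf F'"
    and stalk_iso: "stalkwise_iso F F' \<theta>"
    and maps_sec: "\<And>V s. open V \<Longrightarrow> s \<in> sec F V \<Longrightarrow>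
      \<exists>t\<in>sec F' V. \<forall>z\<in>V. germ F' z V t = \<theta> z (germ F z V s)"
    and onto_sec: "\<And>V t. open V \<Longrightarrow> t \<in> sec F' V \<Longrightarrow>
      \<exists>s\<in>sec F V. \<forall>z\<in>V. germ F' z V t = \<theta> z (germ F z V s)"
begin

definition induced_iso :: "'a set \<Rightarrow> 'v \<Rightarrow> 'w"
  where "induced_iso V s = (THE t. t \<in> sec F' V \<and> (\<forall>z\<in>V. germ F' z V t = \<theta> z (germ F z V s)))"

lemma induced_iso_eqI:
  assumes "open V" "s \<in> sec F V" "t \<in> sec F' V" "\<And>z. z \<in> V \<Longrightarrow> germ F' z V t = \<theta> z (germ F z V s)"
  shows "induced_iso V s = t"
  unfolding induced_iso_def
proof (rule the_equality)
  fix t'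
  assume "t' \<in> sec F' V \<and> (\<forall>z\<in>V. germ F' z V t' = \<theta> z (germ F z V s))"
  then show "t' = t"
    using sheaf_sec_eqI_germ[OF sheaf_F' \<open>open V\<close>, of t' t] assms by simp
qed (use assms in blast)

lemma
  assumes "open V" "s \<in> sec F V"
  shows induced_iso_in_sec: "induced_iso V s \<in> sec F' V"
    and germ_induced_iso: "z \<in> V \<Longrightarrow> germ F' z V (induced_iso V s) = \<theta> z (germ F z V s)"
proof -
  obtain t where "t \<in> sec F' V" "\<forall>z\<in>V. germ F' z V t = \<theta> z (germ F z V s)"
    using maps_sec[OF assms] by blast
  moreover from this have "induced_iso V s = t"
    using induced_iso_eqI[OF assms] by blast
  ultimately show "induced_iso V s \<in> sec F' V" "z \<in> V \<Longrightarrow> germ F' z V (induced_iso V s) = \<theta> z (germ F z V s)"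
    by simp_all
qed

lemma \<theta>_add:
  "a \<in> stalk F z \<Longrightarrow> b \<in> stalk F z \<Longrightarrow> \<theta> z (stalk_add F z a b) = stalk_add F' z (\<theta> z a) (\<theta> z b)"
  using stalk_iso unfolding stalkwise_iso_def stalk_lin_iso_def by blast

lemma \<theta>_scale: "a \<in> stalk F z \<Longrightarrow> \<theta> z (stalk_scale F z c a) = stalk_scale F' z c (\<theta> z a)"
  using stalk_iso unfolding stalkwise_iso_def stalk_lin_iso_def by blast

lemma induced_iso_add:
  assumes V: "open V" and s: "s \<in> sec F V" and t: "t \<in> sec F V"
  shows "induced_iso V (s + t) = induced_iso V s + induced_iso V t"
proof (rule induced_iso_eqI)
  fix z
  assume z: "z \<in> V"
  have "germ F' z V (induced_iso V s + induced_iso V t) =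
        stalk_add F' z (\<theta> z (germ F z V s)) (\<theta> z (germ F z V t))"
    using stalk_add_germ[OF sheaf_F'] induced_iso_in_sec germ_induced_iso V s t z by metis
  also have "\<dots> = \<theta> z (germ F z V (s + t))"
    using \<theta>_add stalk_add_germ[OF sheaf_F] germ_in_stalk V s t z by metis
  finally show "germ F' z V (induced_iso V s + induced_iso V t) = \<theta> z (germ F z V (s + t))" .
qed (use V s t sheaf_add_in_sec[OF sheaf_F] sheaf_add_in_sec[OF sheaf_F'] induced_iso_in_sec in auto)

lemma induced_iso_scale:
  assumes V: "open V" and s: "s \<in> sec F V"
  shows "induced_iso V (scl F c s) = scl F' c (induced_iso V s)"
proof (rule induced_iso_eqI)
  fix z
  assume z: "z \<in> V"
  have "germ F' z V (scl F' c (induced_iso V s)) = stalk_scale F' z c (\<theta> z (germ F z V s))"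
    using stalk_scale_germ[OF sheaf_F'] induced_iso_in_sec germ_induced_iso V s z by metis
  also have "\<dots> = \<theta> z (germ F z V (scl F c s))"
    using \<theta>_scale stalk_scale_germ[OF sheaf_F] germ_in_stalk V s z by metis
  finally show "germ F' z V (scl F' c (induced_iso V s)) = \<theta> z (germ F z V (scl F c s))" .
qed (use V s sheaf_scale_in_sec[OF sheaf_F] sheaf_scale_in_sec[OF sheaf_F'] induced_iso_in_sec in auto)

lemma induced_iso_res:
  assumes V: "open V" "open V'" "V' \<subseteq> V" and s: "s \<in> sec F V"
  shows "induced_iso V' (res F V V' s) = res F' V V' (induced_iso V s)"
proof (rule induced_iso_eqI)
  fix z
  assume z: "z \<in> V'"
  have "germ F' z V' (res F' V V' (induced_iso V s)) = \<theta> z (germ F z V s)"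
    using germ_res[OF sheaf_F'] induced_iso_in_sec germ_induced_iso V s z by (metis subsetD)
  also have "\<dots> = \<theta> z (germ F z V' (res F V V' s))"
    using germ_res[OF sheaf_F] V s z by metis
  finally show "germ F' z V' (res F' V V' (induced_iso V s)) = \<theta> z (germ F z V' (res F V V' s))" .
qed (use V s sheaf_res_in_sec[OF sheaf_F] sheaf_res_in_sec[OF sheaf_F'] induced_iso_in_sec in auto)

lemma sheaf_hom_on_induced_iso: "sheaf_hom_on UNIV F F' induced_iso"
  unfolding sheaf_hom_on_def
  by (simp add: induced_iso_in_sec induced_iso_add induced_iso_scale induced_iso_res)

lemma inj_on_induced_iso:
  assumes V: "open V"
  shows "inj_on (induced_iso V) (sec F V)"
proof (rule inj_onI)
  fix s t
  assume st: "s \<in> sec F V" "t \<in> sec F V" "induced_iso V s = induced_iso V t"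
  show "s = t"
  proof (rule sheaf_sec_eqI_germ[OF sheaf_F V st(1,2)])
    fix z
    assume z: "z \<in> V"
    then have "\<theta> z (germ F z V s) = \<theta> z (germ F z V t)"
      using germ_induced_iso[OF V] st by metis
    moreover have "inj_on (\<theta> z) (stalk F z)"
      using stalkwise_iso_bij[OF stalk_iso] by (simp add: bij_betw_def)
    ultimately show "germ F z V s = germ F z V t"
      using germ_in_stalk[OF V z] st(1,2) by (meson inj_onD)
  qed
qed

lemma induced_iso_image:
  assumes V: "open V"
  shows "induced_iso V ` sec F V = sec F' V"
proof
  show "sec F' V \<subseteq> induced_iso V ` sec F V"
  proof
    fix t
    assume t: "t \<in> sec F' V"
    then obtain s where s: "s \<in> sec F V" "\<forall>z\<in>V. germ F' z V t = \<theta> z (germ F z V s)"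
      using onto_sec[OF V] by blast
    then have "induced_iso V s = t"
      using induced_iso_eqI[OF V s(1) t] by blast
    then show "t \<in> induced_iso V ` sec F V"
      using s(1) by blast
  qed
qed (use induced_iso_in_sec[OF V] in blast)

lemma sheaf_iso_on_induced_iso: "sheaf_iso_on UNIV F F' induced_iso"
  unfolding sheaf_iso_on_def bij_betw_def
  by (simp add: sheaf_hom_on_induced_iso inj_on_induced_iso induced_iso_image)

lemma stalk_map_induced_iso: "b \<in> stalk F x \<Longrightarrow> stalk_map F F' induced_iso x b = \<theta> x b"
  unfolding stalk_def
  using stalk_map_germ[OF sheaf_F sheaf_F' sheaf_hom_on_induced_iso] germ_induced_iso by force

lemma induced_iso_unique:
  assumes T: "sheaf_hom_on UNIV F F' T" and stalks: "\<And>x b. b \<in> stalk F x \<Longrightarrow> stalk_map F F' T x b = \<theta> x b"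
    and "open U" "s \<in> sec F U"
  shows "T U s = induced_iso U s"
proof (rule induced_iso_eqI[symmetric])
  fix z
  assume "z \<in> U"
  then show "germ F' z U (T U s) = \<theta> z (germ F z U s)"
    using stalk_map_germ[OF sheaf_F sheaf_F' T] stalks germ_in_stalk assms(3,4) by metis
qed (use assms sheaf_hom_on_in_sec[OF T] in auto)

end

lemma section_preserving_stalk_transfer:
  fixes G :: "('a::topological_space, 'k::field, 'g::ab_group_add) sheaf"
    and F :: "('a, 'k, 'f::ab_group_add) sheaf"
    and F' :: "('a, 'k, 'h::ab_group_add) sheaf"
  assumes lc: "locally connected (UNIV :: 'a set)"
    and G: "locally_constant_sheaf G" and F: "locally_constant_sheaf F" and F': "locally_constant_sheaf F'"
    and \<Phi>: "stalkwise_iso G F \<Phi>" and \<Psi>: "stalkwise_iso G F' \<Psi>"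
    and dev: "same_deviation G F \<Phi> F' \<Psi>"
  shows "section_preserving_stalk_iso F F' (stalk_transfer G \<Phi> \<Psi>)"
proof
  show "is_sheaf F" "is_sheaf F'"
    using F F' by (simp_all add: locally_constant_sheaf_def)
  show "stalkwise_iso F F' (stalk_transfer G \<Phi> \<Psi>)"
    using stalkwise_iso_stalk_transfer[OF _ \<Phi> \<Psi>] G by (simp add: locally_constant_sheaf_def)
  show "\<exists>t\<in>sec F' V. \<forall>z\<in>V. germ F' z V t = stalk_transfer G \<Phi> \<Psi> z (germ F z V s)"
    if "open V" "s \<in> sec F V" for V s
    using stalk_transfer_lifts_section[OF lc G F F' \<Phi> \<Psi> dev that] .
  show "\<exists>s\<in>sec F V. \<forall>z\<in>V. germ F' z V t = stalk_transfer G \<Phi> \<Psi> z (germ F z V s)"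
    if V: "open V" and t: "t \<in> sec F' V" for V t
  proof -
    obtain s where s: "s \<in> sec F V" "\<forall>z\<in>V. germ F z V s = stalk_transfer G \<Psi> \<Phi> z (germ F' z V t)"
      using stalk_transfer_lifts_section[OF lc G F' F \<Psi> \<Phi> same_deviation_sym[OF dev] V t] by blast
    have "germ F' z V t = stalk_transfer G \<Phi> \<Psi> z (germ F z V s)" if z: "z \<in> V" for z
      using s(2) z stalk_transfer_swap[OF \<Phi> \<Psi> germ_in_stalk[OF V z t]] by simp
    then show ?thesis
      using s(1) by (intro bexI[of _ s] ballI)
  qed
qed

theorem mainTheorem2:
  fixes G :: "('a::topological_space, 'k::field, 'g::ab_group_add) sheaf"
    and F :: "('a, 'k, 'f::ab_group_add) sheaf"
    and F' :: "('a, 'k, 'h::ab_group_add) sheaf"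
    and \<Phi> :: "'a \<Rightarrow> ('a set \<times> 'g) set \<Rightarrow> ('a set \<times> 'f) set"
    and \<Psi> :: "'a \<Rightarrow> ('a set \<times> 'g) set \<Rightarrow> ('a set \<times> 'h) set"
  assumes "locally connected (UNIV :: 'a set)"
    and "locally_constant_sheaf G"
    and "locally_constant_sheaf F"
    and "locally_constant_sheaf F'"
    and "stalkwise_iso G F \<Phi>"
    and "stalkwise_iso G F' \<Psi>"
    and "\<forall>x y U. open U \<and> connected U \<and> x \<in> U \<and> y \<in> U \<and>
           simple_for G U \<and> simple_for F U \<and> simple_for F' U \<longrightarrow>
           (\<forall>s\<in>sec G U. deviation G F \<Phi> U y x s = deviation G F' \<Psi> U y x s)"
  shows "\<exists>T. sheaf_iso_on UNIV F F' T \<and>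
              (\<forall>x. \<forall>a\<in>stalk G x. \<Psi> x a = stalk_map F F' T x (\<Phi> x a)) \<and>
              (\<forall>T'. sheaf_iso_on UNIV F F' T' \<and>
                    (\<forall>x. \<forall>a\<in>stalk G x. \<Psi> x a = stalk_map F F' T' x (\<Phi> x a)) \<longrightarrow>
                    (\<forall>U. open U \<longrightarrow> (\<forall>s\<in>sec F U. T' U s = T U s)))"
proof -
  have "same_deviation G F \<Phi> F' \<Psi>"
    using assms(7) unfolding same_deviation_def .
  then interpret section_preserving_stalk_iso F F' "stalk_transfer G \<Phi> \<Psi>"
    using section_preserving_stalk_transfer[OF assms(1-6)] by blast
  have factor_iff: "(\<forall>a\<in>stalk G x. \<Psi> x a = stalk_map F F' T x (\<Phi> x a)) \<longleftrightarrow>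
      (\<forall>b\<in>stalk F x. stalk_map F F' T x b = stalk_transfer G \<Phi> \<Psi> x b)" for T x
    using stalk_transfer_factor_iff[OF assms(5)] .
  show ?thesis
  proof (intro exI[of _ induced_iso] conjI allI impI)
    show "sheaf_iso_on UNIV F F' induced_iso"
      by (rule sheaf_iso_on_induced_iso)
    show "\<forall>a\<in>stalk G x. \<Psi> x a = stalk_map F F' induced_iso x (\<Phi> x a)" for x
      unfolding factor_iff using stalk_map_induced_iso by simp
    fix T' :: "'a set \<Rightarrow> 'f \<Rightarrow> 'h" and U :: "'a set"
    assume "sheaf_iso_on UNIV F F' T' \<and> (\<forall>x. \<forall>a\<in>stalk G x. \<Psi> x a = stalk_map F F' T' x (\<Phi> x a))"
      and "open U"
    then show "\<forall>s\<in>sec F U. T' U s = induced_iso U s"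
      using induced_iso_unique[of T'] unfolding factor_iff sheaf_iso_on_def by simp
  qed
qed

end
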